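(* Let $l>0$ and for $\rho\in[-1,1]$ let $h(\rho)=\mathbb{E}\big(1\wedge e^{-lZ_1-l^2/2}\wedge e^{-lZ_2-l^2/2}\big)$ with $(Z_1,Z_2)\sim\mathrm{BVN}(\rho)$. Then $\partial_\rho h(\rho)>0$ for all $\rho\in(-1,1)$ and $\lim_{\rho\nearrow1}\partial_\rho h(\rho)=\infty$; and $\partial_\rho^2h(\rho)>0$ for all $\rho\in[0,1)$.
   Context: $\mathrm{BVN}(\rho)$ denotes the bivariate normal distribution with zero means, unit variances and correlation $\rho$. *)

theory Defs
  imports "HOL-Probability.Probability"
begin

definition std_normal :: "real measure" where
  "std_normal = density lborel std_normal_density"

text \<open>Bivariate normal BVN(rho): zero means, unit variances, correlation rho,
  for rho in [-1,1], realised as the law of (Z, rho Z + sqrt(1-rho^2) W)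
  with Z, W independent standard normals (this also covers rho = +-1).\<close>
definition BVN :: "real \<Rightarrow> (real \<times> real) measure" where
  "BVN \<rho> = distr (std_normal \<Otimes>\<^sub>M std_normal) borel
      (\<lambda>(z, w). (z, \<rho> * z + sqrt (1 - \<rho>\<^sup>2) * w))"

definition hfun :: "real \<Rightarrow> real \<Rightarrow> real" where
  "hfun l \<rho> = (\<integral>(z1, z2). min 1 (min (exp (- l * z1 - l\<^sup>2 / 2)) (exp (- l * z2 - l\<^sup>2 / 2))) \<partial>BVN \<rho>)"

end

theory Submission
  imports Defs
begin

(* Since exp (- l x - l^2/2) is decreasing in x and equals 1 at x = -l/2, the integrand of h is
   exp (- l max(Z1, Z2, -l/2) - l^2/2) = int_{max(Z1,Z2)}^oo W(t) dt, where
   W(t) = l exp (- l t - l^2/2) on [-l/2, oo) is a probability density. By Tonelli,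
   h(rho) = int W(t) F_rho(t) dt with F_rho(t) = P(Z1 <= t, Z2 <= t). Plackett's identity
   d/drho F_rho(t) = exp (- t^2/(1+rho)) / (2 pi sqrt(1-rho^2)) then gives
   h'(rho) = K(rho) / (2 pi sqrt(1-rho^2)) with K(rho) = int W(t) exp (- t^2/(1+rho)) dt,
   which is positive and increasing in rho. Hence h' > 0 and h'(rho) -> oo as rho -> 1, and
   h'' = K' / (2 pi sqrt(1-rho^2)) + rho K / (2 pi sqrt(1-rho^2)^3) > 0 for rho >= 0. *)

lemma DERIV_integral_dominated:
  fixes f f' :: "real \<Rightarrow> 'a \<Rightarrow> real" and g :: "'a \<Rightarrow> real"
  assumes r0: "a < r0" "r0 < b"
    and integrable: "\<And>r. a < r \<Longrightarrow> r < b \<Longrightarrow> integrable M (f r)"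
    and deriv: "\<And>x r. a < r \<Longrightarrow> r < b \<Longrightarrow> ((\<lambda>r. f r x) has_real_derivative f' r x) (at r)"
    and bound: "\<And>x r. a < r \<Longrightarrow> r < b \<Longrightarrow> \<bar>f' r x\<bar> \<le> g x"
    and "integrable M g"
    and "f' r0 \<in> borel_measurable M"
  shows "((\<lambda>r. \<integral>x. f r x \<partial>M) has_real_derivative (\<integral>x. f' r0 x \<partial>M)) (at r0)"
proof -
  define q where "q u x = (f u x - f r0 x) / (u - r0)" for u x
  have q_mvt: "\<exists>\<xi>. a < \<xi> \<and> \<xi> < b \<and> q u x = f' \<xi> x" if u: "u \<in> {a<..<b} - {r0}" for u x
  proof (cases "u < r0")
    case True
    then obtain \<xi> where "u < \<xi>" "\<xi> < r0" "f r0 x - f u x = (r0 - u) * f' \<xi> x"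
      using MVT2[of u r0 "\<lambda>r. f r x" "\<lambda>r. f' r x"] deriv u r0 by fastforce
    with True u r0 show ?thesis unfolding q_def by (intro exI[of _ \<xi>]) (auto simp: field_simps)
  next
    case False
    then have "r0 < u" using u by auto
    then obtain \<xi> where "r0 < \<xi>" "\<xi> < u" "f u x - f r0 x = (u - r0) * f' \<xi> x"
      using MVT2[of r0 u "\<lambda>r. f r x" "\<lambda>r. f' r x"] deriv u r0 by fastforce
    with \<open>r0 < u\<close> u r0 show ?thesis unfolding q_def by (intro exI[of _ \<xi>]) (auto simp: field_simps)
  qed
  have "((\<lambda>u. ((\<integral>x. f u x \<partial>M) - (\<integral>x. f r0 x \<partial>M)) / (u - r0)) \<longlongrightarrow> (\<integral>x. f' r0 x \<partial>M))
      (at r0 within {a<..<b})"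
    unfolding tendsto_at_iff_sequentially comp_def
  proof (intro allI impI)
    fix X :: "nat \<Rightarrow> real"
    assume X: "\<forall>i. X i \<in> {a<..<b} - {r0}" and "X \<longlonglongrightarrow> r0"
    have q_lim: "(\<lambda>i. q (X i) x) \<longlonglongrightarrow> f' r0 x" for x
      using deriv[OF r0, of x] X \<open>X \<longlonglongrightarrow> r0\<close>
      unfolding has_field_derivative_iff tendsto_at_iff_sequentially q_def comp_def by auto
    have "(\<lambda>i. \<integral>x. q (X i) x \<partial>M) \<longlonglongrightarrow> (\<integral>x. f' r0 x \<partial>M)"
    proof (rule integral_dominated_convergence[where w = g])
      show "AE x in M. norm (q (X i) x) \<le> g x" for i
      proof (rule AE_I2)
        fix x
        obtain \<xi> where "a < \<xi>" "\<xi> < b" "q (X i) x = f' \<xi> x"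
          using q_mvt X by blast
        then show "norm (q (X i) x) \<le> g x" using bound by simp
      qed
    qed (use assms X q_lim in \<open>auto simp: q_def\<close>)
    moreover have "(\<integral>x. q (X i) x \<partial>M) = ((\<integral>x. f (X i) x \<partial>M) - (\<integral>x. f r0 x \<partial>M)) / (X i - r0)" for i
      using integrable X r0 by (simp add: q_def)
    ultimately show "(\<lambda>i. ((\<integral>x. f (X i) x \<partial>M) - (\<integral>x. f r0 x \<partial>M)) / (X i - r0)) \<longlonglongrightarrow> (\<integral>x. f' r0 x \<partial>M)"
      by simp
  qed
  moreover have "at r0 within {a<..<b} = at r0"
    using r0 by (intro at_within_open) auto
  ultimately show ?thesis
    by (simp add: has_field_derivative_iff)
qed

lemma integral_pos_if_pos_on_interval:
  fixes f :: "real \<Rightarrow> real"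
  assumes "integrable lborel f" and nonneg: "\<And>x. 0 \<le> f x"
    and pos: "\<And>x. a \<le> x \<Longrightarrow> x \<le> b \<Longrightarrow> 0 < f x" and "a < b"
  shows "0 < (\<integral>x. f x \<partial>lborel)"
proof -
  have "(\<integral>x. f x \<partial>lborel) \<noteq> 0"
  proof
    assume "(\<integral>x. f x \<partial>lborel) = 0"
    then have "AE x in lborel. f x = 0"
      using integral_nonneg_eq_0_iff_AE[OF assms(1)] nonneg by simp
    then have "AE x in lborel. x \<notin> {a..b}"
      by (rule AE_mp) (auto intro!: AE_I2 dest: pos)
    then have "emeasure lborel {a..b} = 0"
      by (subst (asm) AE_iff_measurable[of "{a..b}"]) auto
    with \<open>a < b\<close> show False by simp
  qed
  moreover have "0 \<le> (\<integral>x. f x \<partial>lborel)"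
    using nonneg by (simp add: integral_nonneg_AE)
  ultimately show ?thesis by simp
qed

section \<open>The standard normal distribution function\<close>

abbreviation phi :: "real \<Rightarrow> real" where
  "phi \<equiv> std_normal_density"

definition Phi :: "real \<Rightarrow> real" where
  "Phi x = (\<integral>w. phi w * indicator {..x} w \<partial>lborel)"

lemma phi_le_1: "phi x \<le> 1"
proof -
  have "exp (- x\<^sup>2 / 2) \<le> 1" by simp
  moreover have "1 / sqrt (2 * pi) \<le> 1" using pi_gt3 by (simp add: divide_le_eq)
  ultimately show ?thesis unfolding std_normal_density_def
    by (metis exp_ge_zero less_eq_real_def mult_le_one zero_le_divide_1_iff zero_le_one real_sqrt_ge_zero)
qed

lemma integrable_phi_indicator [simp]:
  "A \<in> sets borel \<Longrightarrow> integrable lborel (\<lambda>w. phi w * indicator A w)"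
  by (intro integrable_real_mult_indicator) auto

lemma Phi_eq_interval_integral: "Phi y = Phi 0 + (LBINT w=0..y. phi w)"
proof (cases "0 \<le> y")
  case True
  have "Phi y = (\<integral>w. phi w * indicator {..0} w + phi w * indicator {0<..y} w \<partial>lborel)"
    unfolding Phi_def using True
    by (intro Bochner_Integration.integral_cong) (auto split: split_indicator)
  also have "\<dots> = Phi 0 + (\<integral>w. phi w * indicator {0<..y} w \<partial>lborel)"
    unfolding Phi_def by (intro Bochner_Integration.integral_add) auto
  also have "(\<integral>w. phi w * indicator {0<..y} w \<partial>lborel) = (LBINT w=ereal 0..ereal y. phi w)"
    using True by (subst interval_integral_Ioc) (auto simp: set_lebesgue_integral_def mult.commute)
  finally show ?thesis unfolding zero_ereal_def .
next
  case False
  have "Phi 0 = (\<integral>w. phi w * indicator {..y} w + phi w * indicator {y<..0} w \<partial>lborel)"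
    unfolding Phi_def using False
    by (intro Bochner_Integration.integral_cong) (auto split: split_indicator)
  also have "\<dots> = Phi y + (\<integral>w. phi w * indicator {y<..0} w \<partial>lborel)"
    unfolding Phi_def by (intro Bochner_Integration.integral_add) auto
  also have "(\<integral>w. phi w * indicator {y<..0} w \<partial>lborel) = (LBINT w=ereal y..ereal 0. phi w)"
    using False by (subst interval_integral_Ioc) (auto simp: set_lebesgue_integral_def mult.commute)
  finally show ?thesis
    unfolding zero_ereal_def using interval_integral_endpoints_reverse[of "ereal 0" "ereal y" phi] by simp
qed

lemma DERIV_Phi: "(Phi has_real_derivative phi x) (at x)"
proof -
  let ?I = "{- \<bar>x\<bar> - 1 .. \<bar>x\<bar> + 1}"
  have "continuous_on ?I phi"
    unfolding normal_density_def by (intro continuous_intros) auto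
  then have "((\<lambda>u. LBINT w=0..u. phi w) has_vector_derivative phi x) (at x within ?I)"
    using interval_integral_FTC2[of "- \<bar>x\<bar> - 1" 0 "\<bar>x\<bar> + 1" phi x]
    unfolding zero_ereal_def by auto
  moreover have "at x within ?I = at x"
    by (rule at_within_interior) auto
  ultimately have "((\<lambda>u. Phi 0 + (LBINT w=0..u. phi w)) has_real_derivative phi x) (at x)"
    by (auto intro!: derivative_eq_intros simp: has_real_derivative_iff_has_vector_derivative)
  then show ?thesis
    by (simp flip: Phi_eq_interval_integral)
qed

lemma borel_measurable_Phi [measurable]: "Phi \<in> borel_measurable borel"
  using DERIV_Phi DERIV_isCont
  by (intro borel_measurable_continuous_onI continuous_at_imp_continuous_on) blast

lemma Phi_nonneg: "0 \<le> Phi x"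
  unfolding Phi_def by (intro integral_nonneg_AE) auto

lemma Phi_le_1: "Phi x \<le> 1"
proof -
  have "Phi x \<le> (\<integral>w. phi w \<partial>lborel)"
    unfolding Phi_def by (intro integral_mono) (auto split: split_indicator)
  then show ?thesis by simp
qed

lemma nn_integral_phi_atMost: "(\<integral>\<^sup>+w. ennreal (phi w * indicator {..x} w) \<partial>lborel) = ennreal (Phi x)"
  unfolding Phi_def by (intro nn_integral_eq_integral) auto

section \<open>An integral representation of h\<close>

definition exp_weight :: "real \<Rightarrow> real \<Rightarrow> real" where
  "exp_weight l t = l * exp (- l * t - l\<^sup>2 / 2) * indicator {- l / 2..} t"

lemma nn_integral_exp_tail:
  assumes "l > 0"
  shows "(\<integral>\<^sup>+t. ennreal (l * exp (- l * t - l\<^sup>2 / 2)) * indicator {m..} t \<partial>lborel)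
    = ennreal (exp (- l * m - l\<^sup>2 / 2))"
proof -
  have "(\<integral>\<^sup>+t. ennreal (l * exp (- l * t - l\<^sup>2 / 2)) * indicator {m..} t \<partial>lborel)
      = ennreal (0 - (- exp (- l * m - l\<^sup>2 / 2)))"
  proof (rule nn_integral_FTC_atLeast)
    show "((\<lambda>t. - exp (- l * t - l\<^sup>2 / 2)) \<longlongrightarrow> 0) at_top"
      using assms by real_asymp
  qed (use assms in \<open>auto intro!: derivative_eq_intros\<close>)
  then show ?thesis by simp
qed

lemma exp_weight_nonneg: "l > 0 \<Longrightarrow> 0 \<le> exp_weight l t"
  unfolding exp_weight_def by (auto split: split_indicator)

lemma borel_measurable_exp_weight [measurable]: "exp_weight l \<in> borel_measurable borel"
  unfolding exp_weight_def by measurable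

lemma integrable_exp_weight:
  assumes "l > 0"
  shows "integrable lborel (exp_weight l)"
proof (rule integrableI_nn_integral_finite)
  have "(\<integral>\<^sup>+t. ennreal (exp_weight l t) \<partial>lborel)
      = (\<integral>\<^sup>+t. ennreal (l * exp (- l * t - l\<^sup>2 / 2)) * indicator {- l / 2..} t \<partial>lborel)"
    unfolding exp_weight_def by (intro nn_integral_cong) (auto split: split_indicator)
  also have "\<dots> = ennreal 1"
    using nn_integral_exp_tail[OF assms] by (simp add: power2_eq_square)
  finally show "(\<integral>\<^sup>+t. ennreal (exp_weight l t) \<partial>lborel) = ennreal 1" .
qed (use assms exp_weight_nonneg in auto)

lemma min_exp_eq_nn_integral_exp_weight:
  assumes l: "l > 0"
  shows "ennreal (min 1 (min (exp (- l * z - l\<^sup>2 / 2)) (exp (- l * y - l\<^sup>2 / 2))))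
    = (\<integral>\<^sup>+t. ennreal (exp_weight l t * indicator {..t} z * indicator {..t} y) \<partial>lborel)"
proof -
  have min_exp: "min (exp (- l * a - l\<^sup>2 / 2)) (exp (- l * b - l\<^sup>2 / 2)) = exp (- l * max a b - l\<^sup>2 / 2)" for a b
    using l by (cases "a \<le> b") (auto simp: min_def max_def mult_left_mono)
  have "(\<integral>\<^sup>+t. ennreal (exp_weight l t * indicator {..t} z * indicator {..t} y) \<partial>lborel)
      = (\<integral>\<^sup>+t. ennreal (l * exp (- l * t - l\<^sup>2 / 2)) * indicator {max (max z y) (- l / 2)..} t \<partial>lborel)"
    unfolding exp_weight_def by (intro nn_integral_cong) (auto split: split_indicator)
  also have "\<dots> = ennreal (exp (- l * max (max z y) (- l / 2) - l\<^sup>2 / 2))"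
    by (rule nn_integral_exp_tail[OF l])
  also have "\<dots> = ennreal (min (min (exp (- l * z - l\<^sup>2 / 2)) (exp (- l * y - l\<^sup>2 / 2)))
      (exp (- l * (- l / 2) - l\<^sup>2 / 2)))"
    by (simp only: min_exp)
  also have "exp (- l * (- l / 2) - l\<^sup>2 / 2) = 1"
    by (simp add: power2_eq_square)
  finally show ?thesis by (simp add: min.commute)
qed

lemma borel_measurable_indicator_atMost_app [measurable (raw)]:
  fixes f g :: "'a \<Rightarrow> real"
  assumes [measurable]: "f \<in> borel_measurable M" "g \<in> borel_measurable M"
  shows "(\<lambda>x. indicator {..f x} (g x) :: real) \<in> borel_measurable M"
  unfolding indicator_def atMost_iff by measurable

lemmas borel_measurable_Phi_comp [measurable (raw)] = measurable_compose[OF _ borel_measurable_Phi]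

lemma prob_space_std_normal: "prob_space std_normal"
  unfolding std_normal_def by (rule prob_space_normal_density) simp

lemma sets_std_normal [measurable_cong]: "sets std_normal = sets borel"
  by (simp add: std_normal_def)

lemma measurable_BVN_map:
  "(\<lambda>(z, w). (z, \<rho> * z + sqrt (1 - \<rho>\<^sup>2) * w)) \<in> measurable (std_normal \<Otimes>\<^sub>M std_normal) borel"
proof -
  have "(\<lambda>(z, w). (z, \<rho> * z + sqrt (1 - \<rho>\<^sup>2) * w)) \<in> measurable (std_normal \<Otimes>\<^sub>M std_normal) (borel \<Otimes>\<^sub>M borel)"
    by measurable
  then show ?thesis by (simp add: borel_prod)
qed

lemma sets_BVN [measurable_cong]: "sets (BVN \<rho>) = sets (borel \<Otimes>\<^sub>M borel)"
  by (simp add: BVN_def borel_prod[symmetric])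

lemma prob_space_BVN: "prob_space (BVN \<rho>)"
proof -
  interpret pair_prob_space std_normal std_normal
    by (simp add: pair_prob_space_def pair_sigma_finite_def prob_space_std_normal prob_space_imp_sigma_finite)
  show ?thesis
    unfolding BVN_def by (rule prob_space_distr[OF measurable_BVN_map])
qed

lemma nn_integral_BVN:
  assumes [measurable]: "f \<in> borel_measurable borel"
  shows "(\<integral>\<^sup>+p. f p \<partial>BVN \<rho>)
    = (\<integral>\<^sup>+z. \<integral>\<^sup>+w. ennreal (phi z * phi w) * f (z, \<rho> * z + sqrt (1 - \<rho>\<^sup>2) * w) \<partial>lborel \<partial>lborel)"
proof -
  interpret std_normal: prob_space std_normal by (rule prob_space_std_normal)
  have [measurable]: "(\<lambda>p. f (fst p, \<rho> * fst p + sqrt (1 - \<rho>\<^sup>2) * snd p)) \<in> borel_measurable (borel \<Otimes>\<^sub>M borel)"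
    by (simp add: borel_prod[symmetric])
  have "(\<integral>\<^sup>+p. f p \<partial>BVN \<rho>) = (\<integral>\<^sup>+p. f (fst p, \<rho> * fst p + sqrt (1 - \<rho>\<^sup>2) * snd p) \<partial>(std_normal \<Otimes>\<^sub>M std_normal))"
    unfolding BVN_def by (subst nn_integral_distr[OF measurable_BVN_map]) (auto simp: case_prod_beta)
  also have "\<dots> = (\<integral>\<^sup>+z. \<integral>\<^sup>+w. f (z, \<rho> * z + sqrt (1 - \<rho>\<^sup>2) * w) \<partial>std_normal \<partial>std_normal)"
    by (subst std_normal.nn_integral_fst[symmetric]) auto
  also have "\<dots> = (\<integral>\<^sup>+z. ennreal (phi z) * \<integral>\<^sup>+w. ennreal (phi w) * f (z, \<rho> * z + sqrt (1 - \<rho>\<^sup>2) * w) \<partial>lborel \<partial>lborel)"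
    unfolding std_normal_def by (subst nn_integral_density; (auto intro!: nn_integral_cong simp: nn_integral_density)?)
  also have "\<dots> = (\<integral>\<^sup>+z. \<integral>\<^sup>+w. ennreal (phi z * phi w) * f (z, \<rho> * z + sqrt (1 - \<rho>\<^sup>2) * w) \<partial>lborel \<partial>lborel)"
    by (intro nn_integral_cong) (auto simp: nn_integral_cmult[symmetric] ennreal_mult mult.assoc)
  finally show ?thesis .
qed

(* Conditionally on Z1 = z, the event Z2 <= t has probability Phi ((t - rho z) / sqrt (1 - rho^2)). *)
definition bvn_cdf_diag :: "real \<Rightarrow> real \<Rightarrow> real" where
  "bvn_cdf_diag \<rho> t = (\<integral>z. phi z * indicator {..t} z * Phi ((t - \<rho> * z) / sqrt (1 - \<rho>\<^sup>2)) \<partial>lborel)"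

lemma borel_measurable_bvn_cdf_diag [measurable]: "bvn_cdf_diag \<rho> \<in> borel_measurable borel"
  unfolding bvn_cdf_diag_def by measurable

lemma integrable_bvn_cdf_diag_integrand:
  "integrable lborel (\<lambda>z. phi z * indicator {..t} z * Phi ((t - \<rho> * z) / sqrt (1 - \<rho>\<^sup>2)))"
  by (rule Bochner_Integration.integrable_bound[where f = phi])
     (auto intro!: AE_I2 mult_left_le simp: Phi_nonneg Phi_le_1 abs_mult split: split_indicator)

lemma bvn_cdf_diag_nonneg: "0 \<le> bvn_cdf_diag \<rho> t"
  unfolding bvn_cdf_diag_def by (intro integral_nonneg_AE) (auto simp: Phi_nonneg)

lemma bvn_cdf_diag_le_1: "bvn_cdf_diag \<rho> t \<le> 1"
proof -
  have "bvn_cdf_diag \<rho> t \<le> (\<integral>z. phi z \<partial>lborel)"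
    unfolding bvn_cdf_diag_def
    by (intro integral_mono integrable_bvn_cdf_diag_integrand)
       (auto intro!: mult_left_le simp: Phi_le_1 split: split_indicator)
  then show ?thesis by simp
qed

lemma emeasure_BVN_atMost_Times_atMost:
  assumes "-1 < \<rho>" "\<rho> < 1"
  shows "emeasure (BVN \<rho>) ({..t} \<times> {..t}) = ennreal (bvn_cdf_diag \<rho> t)"
proof -
  define s where "s = sqrt (1 - \<rho>\<^sup>2)"
  have "s > 0" unfolding s_def using assms by (simp add: abs_square_less_1)
  have inner: "(\<integral>\<^sup>+w. ennreal (phi z * phi w) * indicator ({..t} \<times> {..t}) (z, \<rho> * z + s * w) \<partial>lborel)
      = ennreal (phi z * indicator {..t} z * Phi ((t - \<rho> * z) / s))" for z
  proof -
    have "indicator ({..t} \<times> {..t}) (z, \<rho> * z + s * w) = (indicator {..t} z * indicator {..(t - \<rho> * z) / s} w :: ennreal)" for w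
      using \<open>s > 0\<close> by (auto simp: indicator_def field_simps)
    then have "(\<integral>\<^sup>+w. ennreal (phi z * phi w) * indicator ({..t} \<times> {..t}) (z, \<rho> * z + s * w) \<partial>lborel)
        = (\<integral>\<^sup>+w. ennreal (phi z * indicator {..t} z) * ennreal (phi w * indicator {..(t - \<rho> * z) / s} w) \<partial>lborel)"
      by (intro nn_integral_cong) (auto simp: ennreal_mult' mult_ac split: split_indicator)
    also have "\<dots> = ennreal (phi z * indicator {..t} z) * ennreal (Phi ((t - \<rho> * z) / s))"
      by (subst nn_integral_cmult) (simp_all add: nn_integral_phi_atMost)
    also have "\<dots> = ennreal (phi z * indicator {..t} z * Phi ((t - \<rho> * z) / s))"
      by (simp add: ennreal_mult Phi_nonneg)
    finally show ?thesis .
  qed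
  have "emeasure (BVN \<rho>) ({..t} \<times> {..t}) = (\<integral>\<^sup>+p. indicator ({..t} \<times> {..t}) p \<partial>BVN \<rho>)"
    by (simp add: sets_BVN borel_Times)
  also have "\<dots> = (\<integral>\<^sup>+z. ennreal (phi z * indicator {..t} z * Phi ((t - \<rho> * z) / s)) \<partial>lborel)"
    by (subst nn_integral_BVN) (auto simp: borel_Times s_def[symmetric] inner intro: borel_measurable_indicator)
  also have "\<dots> = ennreal (bvn_cdf_diag \<rho> t)"
    unfolding bvn_cdf_diag_def s_def
    by (intro nn_integral_eq_integral integrable_bvn_cdf_diag_integrand) (auto simp: Phi_nonneg)
  finally show ?thesis .
qed

lemma integrable_exp_weight_mult_bvn_cdf_diag:
  "l > 0 \<Longrightarrow> integrable lborel (\<lambda>t. exp_weight l t * bvn_cdf_diag \<rho> t)"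
  by (rule Bochner_Integration.integrable_bound[OF integrable_exp_weight])
     (auto intro!: AE_I2 mult_left_le simp: exp_weight_nonneg bvn_cdf_diag_nonneg bvn_cdf_diag_le_1 abs_mult)

lemma hfun_eq_integral_bvn_cdf_diag:
  assumes l: "l > 0" and \<rho>: "-1 < \<rho>" "\<rho> < 1"
  shows "hfun l \<rho> = (\<integral>t. exp_weight l t * bvn_cdf_diag \<rho> t \<partial>lborel)"
proof -
  interpret BVN: prob_space "BVN \<rho>" by (rule prob_space_BVN)
  interpret pair_sigma_finite "BVN \<rho>" lborel
    by (simp add: pair_sigma_finite_def BVN.sigma_finite_measure_axioms lborel.sigma_finite_measure_axioms)
  define E where "E p = min 1 (min (exp (- l * fst p - l\<^sup>2 / 2)) (exp (- l * snd p - l\<^sup>2 / 2)))" for p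
  define G where "G p t = ennreal (exp_weight l t * indicator {..t} (fst p) * indicator {..t} (snd p))" for p t
  have [measurable]: "E \<in> borel_measurable (BVN \<rho>)"
    unfolding E_def by measurable
  have [measurable]: "case_prod G \<in> borel_measurable (BVN \<rho> \<Otimes>\<^sub>M lborel)"
    unfolding G_def by measurable
  have "hfun l \<rho> = enn2real (\<integral>\<^sup>+p. ennreal (E p) \<partial>BVN \<rho>)"
    unfolding hfun_def E_def case_prod_beta by (rule integral_eq_nn_integral) auto
  also have "(\<integral>\<^sup>+p. ennreal (E p) \<partial>BVN \<rho>) = (\<integral>\<^sup>+p. \<integral>\<^sup>+t. G p t \<partial>lborel \<partial>BVN \<rho>)"
    unfolding E_def G_def by (intro nn_integral_cong min_exp_eq_nn_integral_exp_weight[OF l])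
  also have "\<dots> = (\<integral>\<^sup>+t. \<integral>\<^sup>+p. G p t \<partial>BVN \<rho> \<partial>lborel)"
    by (rule Fubini'[symmetric]) measurable
  also have "\<dots> = (\<integral>\<^sup>+t. ennreal (exp_weight l t) * emeasure (BVN \<rho>) ({..t} \<times> {..t}) \<partial>lborel)"
  proof (intro nn_integral_cong)
    fix t
    have "G p t = ennreal (exp_weight l t) * indicator ({..t} \<times> {..t}) p" for p
      unfolding G_def using exp_weight_nonneg[OF l, of t]
      by (cases p) (simp add: indicator_def ennreal_mult')
    then show "(\<integral>\<^sup>+p. G p t \<partial>BVN \<rho>) = ennreal (exp_weight l t) * emeasure (BVN \<rho>) ({..t} \<times> {..t})"
      by (simp add: nn_integral_cmult)
  qed
  also have "\<dots> = (\<integral>\<^sup>+t. ennreal (exp_weight l t * bvn_cdf_diag \<rho> t) \<partial>lborel)"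
    by (simp add: emeasure_BVN_atMost_Times_atMost[OF \<rho>] ennreal_mult'' bvn_cdf_diag_nonneg)
  also have "\<dots> = ennreal (\<integral>t. exp_weight l t * bvn_cdf_diag \<rho> t \<partial>lborel)"
    by (intro nn_integral_eq_integral integrable_exp_weight_mult_bvn_cdf_diag l)
       (simp add: exp_weight_nonneg[OF l] bvn_cdf_diag_nonneg)
  finally show ?thesis
    by (simp add: integral_nonneg_AE exp_weight_nonneg[OF l] bvn_cdf_diag_nonneg)
qed

section \<open>Plackett's identity\<close>

lemma one_minus_square_lower_bound:
  fixes a b r :: real
  assumes "a < r" "r < b" "-1 \<le> a" "b \<le> 1"
  shows "(1 - b) * (1 + a) \<le> 1 - r\<^sup>2"
proof -
  have "(1 - b) * (1 + a) \<le> (1 - r) * (1 + r)"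
    using assms by (intro mult_mono) auto
  then show ?thesis by (simp add: power2_eq_square algebra_simps)
qed

lemma DERIV_standardized_arg:
  fixes r t z :: real
  assumes "-1 < r" "r < 1"
  shows "((\<lambda>r. (t - r * z) / sqrt (1 - r\<^sup>2)) has_real_derivative (r * t - z) / sqrt (1 - r\<^sup>2) ^ 3) (at r)"
proof -
  have "0 < 1 - r\<^sup>2" using assms by (simp add: abs_square_less_1)
  then show ?thesis
    by (auto intro!: derivative_eq_intros simp: field_simps power3_eq_cube power2_eq_square)
qed

lemma phi_mult_phi_standardized:
  fixes \<rho> s t z :: real
  assumes "s > 0" and "s\<^sup>2 = 1 - \<rho>\<^sup>2"
  shows "phi z * phi ((t - \<rho> * z) / s) = exp (- t\<^sup>2 / 2) / (2 * pi) * exp (- (z - \<rho> * t)\<^sup>2 / (2 * s\<^sup>2))"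
proof -
  have "1 - \<rho>\<^sup>2 \<noteq> 0" using assms by auto
  then have "- z\<^sup>2 / 2 + - ((t - \<rho> * z) / s)\<^sup>2 / 2 = - t\<^sup>2 / 2 + - (z - \<rho> * t)\<^sup>2 / (2 * s\<^sup>2)"
    unfolding power_divide assms(2) by (simp add: field_simps power2_eq_square)
  then show ?thesis
    unfolding std_normal_density_def by (simp add: exp_add[symmetric] real_sqrt_mult[symmetric])
qed

lemma integral_gaussian_derivative_atMost:
  fixes \<mu> \<sigma> t :: real
  assumes "\<sigma> > 0"
  shows "(\<integral>z. indicator {..t} z * ((\<mu> - z) / \<sigma>\<^sup>2 * exp (- (z - \<mu>)\<^sup>2 / (2 * \<sigma>\<^sup>2))) \<partial>lborel)
    = exp (- (t - \<mu>)\<^sup>2 / (2 * \<sigma>\<^sup>2))"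
proof -
  define H where "H z = exp (- (z - \<mu>)\<^sup>2 / (2 * \<sigma>\<^sup>2))" for z
  define h where "h z = (\<mu> - z) / \<sigma>\<^sup>2 * H z" for z
  have [measurable]: "h \<in> borel_measurable borel"
    unfolding h_def H_def by measurable
  have DERIV_H: "(H has_real_derivative h z) (at z)" for z
    unfolding H_def h_def using assms
    by (auto intro!: derivative_eq_intros simp: field_simps power2_eq_square)
  have "h = (\<lambda>z. - sqrt (2 * pi * \<sigma>\<^sup>2) / \<sigma>\<^sup>2 * (normal_density \<mu> \<sigma> z * (z - \<mu>)))"
  proof
    fix z
    have "sqrt (2 * pi * \<sigma>\<^sup>2) > 0" using assms by simp
    then show "h z = - sqrt (2 * pi * \<sigma>\<^sup>2) / \<sigma>\<^sup>2 * (normal_density \<mu> \<sigma> z * (z - \<mu>))"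
      using assms unfolding h_def H_def normal_density_def by (simp add: field_simps)
  qed
  then have "integrable lborel h"
    using integrable_normal_moment[of \<sigma> \<mu> 1] assms by (simp add: integrable_mult_right)
  have "(LBINT z=-\<infinity>..ereal t. h z) = H t - 0"
  proof (rule interval_integral_FTC_integrable)
    show "(H has_vector_derivative h z) (at z)" for z
      using DERIV_H by (simp add: has_real_derivative_iff_has_vector_derivative)
    show "isCont h z" for z
      unfolding h_def H_def using assms by (auto intro!: continuous_intros)
    show "set_integrable lborel (einterval (- \<infinity>) (ereal t)) h"
      unfolding set_integrable_def by (intro integrable_mult_indicator \<open>integrable lborel h\<close>) auto
    show "((H \<circ> real_of_ereal) \<longlongrightarrow> 0) (at_right (- \<infinity>))"
      unfolding ereal_tendsto_simps1 H_def using assms by real_asymp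
    have "isCont H t"
      unfolding H_def using assms by (auto intro!: continuous_intros)
    then show "((H \<circ> real_of_ereal) \<longlongrightarrow> H t) (at_left (ereal t))"
      unfolding ereal_tendsto_simps1 filterlim_at_split isCont_def by simp
  qed simp
  also have "(LBINT z=-\<infinity>..ereal t. h z) = (\<integral>z. indicator {..<t} z * h z \<partial>lborel)"
    by (simp add: interval_lebesgue_integral_def set_lebesgue_integral_def einterval_def lessThan_def)
  also have "\<dots> = (\<integral>z. indicator {..t} z * h z \<partial>lborel)"
    by (intro integral_cong_AE) (auto intro!: AE_I' [where N = "{t}"] split: split_indicator)
  finally show ?thesis
    unfolding h_def H_def by simp
qed

lemma integral_bvn_cdf_diag_deriv_integrand:
  assumes "-1 < \<rho>" "\<rho> < 1"
  defines "s \<equiv> sqrt (1 - \<rho>\<^sup>2)"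
  shows "(\<integral>z. phi z * indicator {..t} z * (phi ((t - \<rho> * z) / s) * ((\<rho> * t - z) / s ^ 3)) \<partial>lborel)
    = exp (- t\<^sup>2 / (1 + \<rho>)) / (2 * pi * s)"
proof -
  have s: "s > 0" "s\<^sup>2 = 1 - \<rho>\<^sup>2"
    unfolding s_def using assms by (simp_all add: abs_square_less_1 less_imp_le)
  have exponent: "- t\<^sup>2 / 2 + - (t - \<rho> * t)\<^sup>2 / (2 * (1 - \<rho>\<^sup>2)) = - t\<^sup>2 / (1 + \<rho>)"
  proof -
    have "1 - \<rho>\<^sup>2 > 0" "1 + \<rho> > 0" using assms by (auto simp: abs_square_less_1)
    then show ?thesis by (simp add: divide_simps) (simp add: algebra_simps power2_eq_square)
  qed
  have integrand: "phi z * indicator {..t} z * (phi ((t - \<rho> * z) / s) * ((\<rho> * t - z) / s ^ 3))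
      = exp (- t\<^sup>2 / 2) / (2 * pi * s) *
        (indicator {..t} z * ((\<rho> * t - z) / s\<^sup>2 * exp (- (z - \<rho> * t)\<^sup>2 / (2 * s\<^sup>2))))" for z
  proof -
    have "phi z * indicator {..t} z * (phi ((t - \<rho> * z) / s) * ((\<rho> * t - z) / s ^ 3))
        = indicator {..t} z * (phi z * phi ((t - \<rho> * z) / s)) * ((\<rho> * t - z) / s ^ 3)"
      by (simp only: mult_ac)
    then show ?thesis
      using s(1) by (simp add: phi_mult_phi_standardized[OF s] field_simps power3_eq_cube power2_eq_square)
  qed
  have "(\<integral>z. phi z * indicator {..t} z * (phi ((t - \<rho> * z) / s) * ((\<rho> * t - z) / s ^ 3)) \<partial>lborel)
      = exp (- t\<^sup>2 / 2) / (2 * pi * s) * exp (- (t - \<rho> * t)\<^sup>2 / (2 * s\<^sup>2))"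
    by (simp only: integrand integral_mult_right_zero integral_gaussian_derivative_atMost[OF s(1)])
  also have "\<dots> = exp (- t\<^sup>2 / 2 + - (t - \<rho> * t)\<^sup>2 / (2 * s\<^sup>2)) / (2 * pi * s)"
    by (simp only: exp_add) simp
  also have "\<dots> = exp (- t\<^sup>2 / (1 + \<rho>)) / (2 * pi * s)"
    unfolding s(2) exponent ..
  finally show ?thesis .
qed

lemma bvn_cdf_diag_deriv_integrand_bound:
  assumes "0 < \<delta>" "\<delta> \<le> 1 - r\<^sup>2"
  shows "\<bar>phi z * indicator {..t} z * (phi ((t - r * z) / sqrt (1 - r\<^sup>2)) * ((r * t - z) / sqrt (1 - r\<^sup>2) ^ 3))\<bar>
    \<le> phi z * (\<bar>t\<bar> + \<bar>z\<bar>) / sqrt \<delta> ^ 3"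
proof -
  have "\<bar>r\<bar> \<le> 1"
    using assms abs_square_le_1[of r] by simp
  then have "\<bar>r * t - z\<bar> \<le> \<bar>t\<bar> + \<bar>z\<bar>"
    using abs_triangle_ineq4[of "r * t" z] mult_left_le_one_le[of "\<bar>t\<bar>" "\<bar>r\<bar>"]
    by (simp add: abs_mult)
  moreover have "sqrt \<delta> ^ 3 \<le> sqrt (1 - r\<^sup>2) ^ 3"
    using assms by (intro power_mono) auto
  ultimately have "\<bar>r * t - z\<bar> / sqrt (1 - r\<^sup>2) ^ 3 \<le> (\<bar>t\<bar> + \<bar>z\<bar>) / sqrt \<delta> ^ 3"
    using assms by (intro frac_le) auto
  moreover have "\<bar>(r * t - z) / sqrt (1 - r\<^sup>2) ^ 3\<bar> = \<bar>r * t - z\<bar> / sqrt (1 - r\<^sup>2) ^ 3"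
    using assms by (simp add: power_abs)
  ultimately have "\<bar>phi z * indicator {..t} z * (phi ((t - r * z) / sqrt (1 - r\<^sup>2)) * ((r * t - z) / sqrt (1 - r\<^sup>2) ^ 3))\<bar>
      \<le> phi z * 1 * (1 * ((\<bar>t\<bar> + \<bar>z\<bar>) / sqrt \<delta> ^ 3))"
    unfolding abs_mult by (intro mult_mono) (auto simp: phi_le_1 split: split_indicator)
  then show ?thesis by simp
qed

(* The derivative is the BVN(rho) density at (t, t). *)
theorem DERIV_bvn_cdf_diag:
  assumes "-1 < \<rho>" "\<rho> < 1"
  shows "((\<lambda>r. bvn_cdf_diag r t) has_real_derivative exp (- t\<^sup>2 / (1 + \<rho>)) / (2 * pi * sqrt (1 - \<rho>\<^sup>2))) (at \<rho>)"
proof -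
  define a b where "a = (\<rho> - 1) / 2" and "b = (\<rho> + 1) / 2"
  define \<delta> where "\<delta> = (1 - b) * (1 + a)"
  have ab: "a < \<rho>" "\<rho> < b" "-1 < a" "b < 1"
    using assms by (auto simp: a_def b_def)
  then have "0 < \<delta>" unfolding \<delta>_def by simp
  have \<delta>: "\<delta> \<le> 1 - r\<^sup>2" if "a < r" "r < b" for r
    unfolding \<delta>_def using that ab by (intro one_minus_square_lower_bound) auto
  have "integrable lborel (\<lambda>z. \<bar>t\<bar> * phi z + phi z * \<bar>z\<bar> ^ 1)"
    using integrable_std_normal_moment_abs[of 1] by (intro Bochner_Integration.integrable_add integrable_mult_right) auto
  then have integrable_bound: "integrable lborel (\<lambda>z. phi z * (\<bar>t\<bar> + \<bar>z\<bar>) / sqrt \<delta> ^ 3)"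
    by (intro integrable_divide) (simp add: algebra_simps)
  have "((\<lambda>r. bvn_cdf_diag r t) has_real_derivative
      (\<integral>z. phi z * indicator {..t} z * (phi ((t - \<rho> * z) / sqrt (1 - \<rho>\<^sup>2)) * ((\<rho> * t - z) / sqrt (1 - \<rho>\<^sup>2) ^ 3)) \<partial>lborel)) (at \<rho>)"
    unfolding bvn_cdf_diag_def
  proof (rule DERIV_integral_dominated[OF ab(1,2)])
    fix r z :: real
    assume r: "a < r" "r < b"
    then show "\<bar>phi z * indicator {..t} z * (phi ((t - r * z) / sqrt (1 - r\<^sup>2)) * ((r * t - z) / sqrt (1 - r\<^sup>2) ^ 3))\<bar>
        \<le> phi z * (\<bar>t\<bar> + \<bar>z\<bar>) / sqrt \<delta> ^ 3"
      using \<delta> \<open>0 < \<delta>\<close> by (intro bvn_cdf_diag_deriv_integrand_bound) auto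
    have "-1 < r" "r < 1" using r ab by auto
    from DERIV_chain2[OF DERIV_Phi DERIV_standardized_arg[OF this]]
    show "((\<lambda>r. phi z * indicator {..t} z * Phi ((t - r * z) / sqrt (1 - r\<^sup>2))) has_real_derivative
        phi z * indicator {..t} z * (phi ((t - r * z) / sqrt (1 - r\<^sup>2)) * ((r * t - z) / sqrt (1 - r\<^sup>2) ^ 3))) (at r)"
      by (auto intro!: derivative_eq_intros)
  qed (auto intro: integrable_bvn_cdf_diag_integrand integrable_bound)
  then show ?thesis
    using integral_bvn_cdf_diag_deriv_integrand[OF assms] by simp
qed

section \<open>The derivatives of h\<close>

definition weighted_gauss :: "real \<Rightarrow> real \<Rightarrow> real" where
  "weighted_gauss l r = (\<integral>t. exp_weight l t * exp (- t\<^sup>2 / (1 + r)) \<partial>lborel)"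

definition weighted_gauss' :: "real \<Rightarrow> real \<Rightarrow> real" where
  "weighted_gauss' l r = (\<integral>t. exp_weight l t * (exp (- t\<^sup>2 / (1 + r)) * (t\<^sup>2 / (1 + r)\<^sup>2)) \<partial>lborel)"

lemma integrable_weighted_gauss_integrand:
  assumes "l > 0" "-1 < r"
  shows "integrable lborel (\<lambda>t. exp_weight l t * exp (- t\<^sup>2 / (1 + r)))"
proof (rule Bochner_Integration.integrable_bound[OF integrable_exp_weight[OF \<open>l > 0\<close>]])
  show "AE t in lborel. norm (exp_weight l t * exp (- t\<^sup>2 / (1 + r))) \<le> norm (exp_weight l t)"
    using assms exp_weight_nonneg[of l] by (intro AE_I2) (auto simp: abs_mult intro!: mult_left_le)
qed measurable

lemma weighted_gauss_pos:
  assumes "l > 0" "-1 < r"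
  shows "0 < weighted_gauss l r"
  unfolding weighted_gauss_def
  using assms exp_weight_nonneg[of l]
  by (intro integral_pos_if_pos_on_interval[where a = 0 and b = 1] integrable_weighted_gauss_integrand)
     (auto simp: exp_weight_def)

lemma weighted_gauss_mono:
  assumes "l > 0" "-1 < r" "r \<le> r'"
  shows "weighted_gauss l r \<le> weighted_gauss l r'"
  unfolding weighted_gauss_def
proof (intro integral_mono integrable_weighted_gauss_integrand)
  fix t
  have "t\<^sup>2 / (1 + r') \<le> t\<^sup>2 / (1 + r)"
    using assms by (intro divide_left_mono) auto
  then show "exp_weight l t * exp (- t\<^sup>2 / (1 + r)) \<le> exp_weight l t * exp (- t\<^sup>2 / (1 + r'))"
    using assms exp_weight_nonneg[of l t] by (intro mult_left_mono) auto
qed (use assms in auto)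

lemma weighted_gauss'_integrand_bound:
  assumes "l > 0" "-1 < r"
  shows "\<bar>exp_weight l t * (exp (- t\<^sup>2 / (1 + r)) * (t\<^sup>2 / (1 + r)\<^sup>2))\<bar> \<le> exp_weight l t / (1 + r)"
proof -
  have "exp (- x) * x \<le> 1" for x :: real
  proof -
    have "x \<le> exp x" using exp_ge_add_one_self[of x] by linarith
    then show ?thesis by (simp add: exp_minus field_simps)
  qed
  then have "exp (- (t\<^sup>2 / (1 + r))) * (t\<^sup>2 / (1 + r)) * (1 / (1 + r)) \<le> 1 * (1 / (1 + r))"
    by (rule mult_right_mono) (use assms in simp)
  then have "exp (- t\<^sup>2 / (1 + r)) * (t\<^sup>2 / (1 + r)\<^sup>2) \<le> 1 / (1 + r)"
    by (simp add: power2_eq_square)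
  then have "exp_weight l t * (exp (- t\<^sup>2 / (1 + r)) * (t\<^sup>2 / (1 + r)\<^sup>2)) \<le> exp_weight l t * (1 / (1 + r))"
    by (rule mult_left_mono) (rule exp_weight_nonneg[OF assms(1)])
  moreover have "0 \<le> exp_weight l t * (exp (- t\<^sup>2 / (1 + r)) * (t\<^sup>2 / (1 + r)\<^sup>2))"
    using exp_weight_nonneg[OF assms(1)] by simp
  ultimately show ?thesis by simp
qed

lemma integrable_weighted_gauss'_integrand:
  assumes "l > 0" "-1 < r"
  shows "integrable lborel (\<lambda>t. exp_weight l t * (exp (- t\<^sup>2 / (1 + r)) * (t\<^sup>2 / (1 + r)\<^sup>2)))"
proof (rule Bochner_Integration.integrable_bound[where f = "\<lambda>t. exp_weight l t / (1 + r)"])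
  show "AE t in lborel. norm (exp_weight l t * (exp (- t\<^sup>2 / (1 + r)) * (t\<^sup>2 / (1 + r)\<^sup>2)))
      \<le> norm (exp_weight l t / (1 + r))"
    by (intro AE_I2) (simp only: real_norm_def order_trans[OF weighted_gauss'_integrand_bound[OF assms] abs_ge_self])
qed (use assms integrable_exp_weight in auto)

lemma weighted_gauss'_pos:
  assumes "l > 0" "-1 < r"
  shows "0 < weighted_gauss' l r"
  unfolding weighted_gauss'_def
  using assms exp_weight_nonneg[of l]
  by (intro integral_pos_if_pos_on_interval[where a = 1 and b = 2] integrable_weighted_gauss'_integrand)
     (auto simp: exp_weight_def)

lemma DERIV_weighted_gauss:
  assumes "l > 0" "-1 < r0"
  shows "(weighted_gauss l has_real_derivative weighted_gauss' l r0) (at r0)"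
proof -
  define a where "a = (r0 - 1) / 2"
  have a: "-1 < a" "a < r0" using assms unfolding a_def by auto
  show ?thesis
    unfolding weighted_gauss_def[abs_def] weighted_gauss'_def
  proof (rule DERIV_integral_dominated[where a = a and b = "r0 + 1" and g = "\<lambda>t. exp_weight l t / (1 + a)"])
    fix r t :: real
    assume r: "a < r" "r < r0 + 1"
    then show "integrable lborel (\<lambda>t. exp_weight l t * exp (- t\<^sup>2 / (1 + r)))"
      using a assms by (intro integrable_weighted_gauss_integrand) auto
    show "((\<lambda>r. exp_weight l t * exp (- t\<^sup>2 / (1 + r))) has_real_derivative
        exp_weight l t * (exp (- t\<^sup>2 / (1 + r)) * (t\<^sup>2 / (1 + r)\<^sup>2))) (at r)"
      using r a by (auto intro!: derivative_eq_intros simp: power2_eq_square field_simps)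
    have "\<bar>exp_weight l t * (exp (- t\<^sup>2 / (1 + r)) * (t\<^sup>2 / (1 + r)\<^sup>2))\<bar> \<le> exp_weight l t / (1 + r)"
      using r a assms by (intro weighted_gauss'_integrand_bound) auto
    also have "\<dots> \<le> exp_weight l t / (1 + a)"
      using r a assms exp_weight_nonneg[of l t] by (intro divide_left_mono) auto
    finally show "\<bar>exp_weight l t * (exp (- t\<^sup>2 / (1 + r)) * (t\<^sup>2 / (1 + r)\<^sup>2))\<bar> \<le> exp_weight l t / (1 + a)" .
  qed (use a assms in \<open>auto intro: integrable_exp_weight\<close>)
qed

definition hfun' :: "real \<Rightarrow> real \<Rightarrow> real" where
  "hfun' l r = weighted_gauss l r / (2 * pi * sqrt (1 - r\<^sup>2))"

definition hfun'' :: "real \<Rightarrow> real \<Rightarrow> real" where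
  "hfun'' l r = weighted_gauss' l r / (2 * pi * sqrt (1 - r\<^sup>2))
    + r * weighted_gauss l r / (2 * pi * sqrt (1 - r\<^sup>2) ^ 3)"

lemma DERIV_hfun:
  assumes l: "l > 0" and "-1 < \<rho>" "\<rho> < 1"
  shows "(hfun l has_real_derivative hfun' l \<rho>) (at \<rho>)"
proof -
  define a b where "a = (\<rho> - 1) / 2" and "b = (\<rho> + 1) / 2"
  define C where "C = 1 / (2 * pi * sqrt ((1 - b) * (1 + a)))"
  have ab: "a < \<rho>" "\<rho> < b" "-1 < a" "b < 1"
    using assms by (auto simp: a_def b_def)
  have "((\<lambda>r. \<integral>t. exp_weight l t * bvn_cdf_diag r t \<partial>lborel) has_real_derivative
      (\<integral>t. exp_weight l t * (exp (- t\<^sup>2 / (1 + \<rho>)) / (2 * pi * sqrt (1 - \<rho>\<^sup>2))) \<partial>lborel)) (at \<rho>)"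
  proof (rule DERIV_integral_dominated[OF ab(1,2), where g = "\<lambda>t. exp_weight l t * C"])
    fix r t :: real
    assume r: "a < r" "r < b"
    then show "((\<lambda>r. exp_weight l t * bvn_cdf_diag r t) has_real_derivative
        exp_weight l t * (exp (- t\<^sup>2 / (1 + r)) / (2 * pi * sqrt (1 - r\<^sup>2)))) (at r)"
      using ab by (intro DERIV_cmult DERIV_bvn_cdf_diag) auto
    have \<delta>: "(1 - b) * (1 + a) \<le> 1 - r\<^sup>2" "0 < (1 - b) * (1 + a)"
      using r ab by (auto intro: one_minus_square_lower_bound)
    then have "exp (- t\<^sup>2 / (1 + r)) / (2 * pi * sqrt (1 - r\<^sup>2)) \<le> C"
      unfolding C_def using r ab by (intro frac_le) auto
    then have "exp_weight l t * (exp (- t\<^sup>2 / (1 + r)) / (2 * pi * sqrt (1 - r\<^sup>2))) \<le> exp_weight l t * C"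
      by (rule mult_left_mono) (rule exp_weight_nonneg[OF l])
    moreover have "0 \<le> exp_weight l t * (exp (- t\<^sup>2 / (1 + r)) / (2 * pi * sqrt (1 - r\<^sup>2)))"
      using exp_weight_nonneg[OF l, of t] \<delta> by simp
    ultimately show "\<bar>exp_weight l t * (exp (- t\<^sup>2 / (1 + r)) / (2 * pi * sqrt (1 - r\<^sup>2)))\<bar> \<le> exp_weight l t * C"
      by simp
  qed (use l in \<open>auto intro: integrable_exp_weight_mult_bvn_cdf_diag integrable_exp_weight\<close>)
  then have "((\<lambda>r. \<integral>t. exp_weight l t * bvn_cdf_diag r t \<partial>lborel) has_real_derivative hfun' l \<rho>) (at \<rho>)"
    by (simp add: hfun'_def weighted_gauss_def)
  then show ?thesis
    by (rule has_field_derivative_transform_within_open[where S = "{-1<..<1}"])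
       (use assms hfun_eq_integral_bvn_cdf_diag[OF l] in auto)
qed

lemma DERIV_hfun':
  assumes "l > 0" "-1 < r" "r < 1"
  shows "(hfun' l has_real_derivative hfun'' l r) (at r)"
proof -
  define s where "s = sqrt (1 - r\<^sup>2)"
  have "0 < 1 - r\<^sup>2" using assms by (simp add: abs_square_less_1)
  then have "s > 0" unfolding s_def by simp
  have "((\<lambda>r. 2 * pi * sqrt (1 - r\<^sup>2)) has_real_derivative 2 * pi * (- r / s)) (at r)"
    unfolding s_def using \<open>0 < 1 - r\<^sup>2\<close>
    by (auto intro!: derivative_eq_intros simp: field_simps)
  from DERIV_divide[OF DERIV_weighted_gauss[OF assms(1,2)] this]
  have "(hfun' l has_real_derivative
      (weighted_gauss' l r * (2 * pi * s) - weighted_gauss l r * (2 * pi * (- r / s))) / ((2 * pi * s) * (2 * pi * s))) (at r)"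
    using \<open>s > 0\<close> unfolding hfun'_def[abs_def] s_def by simp
  moreover have "(weighted_gauss' l r * (2 * pi * s) - weighted_gauss l r * (2 * pi * (- r / s))) / ((2 * pi * s) * (2 * pi * s))
      = hfun'' l r"
    unfolding hfun''_def s_def[symmetric] using \<open>s > 0\<close> by (simp add: field_simps power3_eq_cube)
  ultimately show ?thesis by simp
qed

lemma deriv_hfun: "l > 0 \<Longrightarrow> -1 < r \<Longrightarrow> r < 1 \<Longrightarrow> deriv (hfun l) r = hfun' l r"
  by (rule DERIV_imp_deriv) (rule DERIV_hfun)

lemma DERIV_deriv_hfun:
  assumes "l > 0" "-1 < r" "r < 1"
  shows "(deriv (hfun l) has_real_derivative hfun'' l r) (at r)"
  by (rule has_field_derivative_transform_within_open[OF DERIV_hfun'[OF assms], where S = "{-1<..<1}"])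
     (use assms deriv_hfun in auto)

lemma hfun'_pos: "l > 0 \<Longrightarrow> -1 < r \<Longrightarrow> r < 1 \<Longrightarrow> 0 < hfun' l r"
  unfolding hfun'_def using weighted_gauss_pos[of l r] by (simp add: abs_square_less_1)

lemma hfun''_pos:
  assumes "l > 0" "0 \<le> r" "r < 1"
  shows "0 < hfun'' l r"
proof -
  have "0 < sqrt (1 - r\<^sup>2)" using assms by (simp add: abs_square_less_1)
  then show ?thesis
    unfolding hfun''_def using assms weighted_gauss_pos[of l r] weighted_gauss'_pos[of l r]
    by (intro add_pos_nonneg divide_pos_pos divide_nonneg_pos mult_nonneg_nonneg) auto
qed

lemma filterlim_hfun'_at_left_1:
  assumes "l > 0"
  shows "filterlim (hfun' l) at_top (at_left 1)"
proof (rule filterlim_at_top_mono)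
  show "LIM r at_left 1. weighted_gauss l 0 / (2 * pi * sqrt (1 - r\<^sup>2)) :> at_top"
    using weighted_gauss_pos[OF assms, of 0] by real_asymp
  show "\<forall>\<^sub>F r in at_left 1. weighted_gauss l 0 / (2 * pi * sqrt (1 - r\<^sup>2)) \<le> hfun' l r"
    using eventually_at_left_real[of 0 "1 :: real"]
  proof (rule eventually_mono)
    fix r :: real
    assume "r \<in> {0<..<1}"
    then show "weighted_gauss l 0 / (2 * pi * sqrt (1 - r\<^sup>2)) \<le> hfun' l r"
      unfolding hfun'_def using weighted_gauss_mono[OF assms, of 0 r]
      by (intro divide_right_mono) (auto simp: abs_square_le_1)
  qed simp
qed

theorem lemma7:
  fixes l :: real
  assumes "l > 0"
  shows "(\<forall>\<rho>\<in>{-1<..<1}. hfun l differentiable (at \<rho>) \<and> deriv (hfun l) \<rho> > 0)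
         \<and> filterlim (deriv (hfun l)) at_top (at_left 1)
         \<and> (\<forall>\<rho>\<in>{0..<1}. deriv (hfun l) differentiable (at \<rho>) \<and> deriv (deriv (hfun l)) \<rho> > 0)"
proof (intro conjI ballI)
  fix \<rho> :: real
  assume "\<rho> \<in> {-1<..<1}"
  then show "hfun l differentiable (at \<rho>)" and "deriv (hfun l) \<rho> > 0"
    using DERIV_hfun deriv_hfun hfun'_pos assms by (auto simp: real_differentiable_def)
next
  have "\<forall>\<^sub>F r in at_left 1. hfun' l r = deriv (hfun l) r"
    using eventually_at_left_real[OF zero_less_one] by eventually_elim (use assms deriv_hfun in auto)
  then show "filterlim (deriv (hfun l)) at_top (at_left 1)"
    by (rule filterlim_cong[OF refl refl, THEN iffD1]) (rule filterlim_hfun'_at_left_1[OF assms])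
next
  fix \<rho> :: real
  assume \<rho>: "\<rho> \<in> {0..<1}"
  then have "(deriv (hfun l) has_real_derivative hfun'' l \<rho>) (at \<rho>)"
    using DERIV_deriv_hfun[OF assms] by simp
  then show "deriv (hfun l) differentiable (at \<rho>)" and "deriv (deriv (hfun l)) \<rho> > 0"
    using \<rho> hfun''_pos[OF assms] by (auto simp: real_differentiable_def DERIV_imp_deriv)
qed

end
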